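(* In the database model described in the context, assume $\pi_{\mathcal D}>0$ and let $0\le\alpha\le1$. Then the random set $\mathcal D^\alpha$ satisfies \[ P(R\in\mathcal D^\alpha\mid R\in\mathcal D)\ge\alpha. \] In particular, if $P(R\in\mathcal D)=1$, then $P(R\in\mathcal D^\alpha)\ge\alpha$.
   Context: Let $E$ be a countable set and let $S$, $G$ be $E$-valued random variables such that for every $e\in E$, $P(S=e)>0$ implies $P(G=e)>0$. For $e\in E$ define the likelihood ratio $LR(e)=P(S=e)/P(G=e)$ if $P(G=e)>0$ and $LR(e)=0$ otherwise. Database model: fix $N\ge1$. Let $R$ be a random variable with values in $\{0,1,\dots,N\}$; we write $R\in\mathcal D$ for $R\in\{1,\dots,N\}$ and $R\notin\mathcal D$ for $R=0$. Put $\pi_i=P(R=i)$ for $1\le i\le N$, $\pi_{\mathcal D}=\sum_{i=1}^N\pi_i$ and $\pi_0=1-\pi_{\mathcal D}=P(R=0)$. There are $E$-valued random variables $P_1,\dots,P_N$ such that conditionally on $R=i$ with $1\le i\le N$, they are independent, $P_i$ has the distribution of $S$ and $P_j$ ($j\ne i$) has the distribution of $G$; and conditionally on $R=0$ they are independent, each with the distribution of $G$. Set $\mathbf{LR}_{\mathcal D}=(LR(P_1),\dots,LR(P_N))$. The set $\mathcal D^\alpha$: given the realized vector $\mathbf{LR}_{\mathcal D}=\mathbf r=(r_1,\dots,r_N)$, order the indices $1,\dots,N$ by decreasing value of $r_i\pi_i$ (with any fixed deterministic tie-breaking rule), let $\mathcal D^k$ be the set of the first $k$ indices in this order, let $k_\alpha$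 be the smallest $k\in\{0,\dots,N\}$ with $\sum_{j\in\mathcal D^k}r_j\pi_j\ge\alpha\sum_{j=1}^N r_j\pi_j$, and set $\mathcal D^\alpha=\mathcal D^{k_\alpha}$ (a random subset of $\{1,\dots,N\}$ determined by $\mathbf{LR}_{\mathcal D}$). *)

theory Defs
  imports "HOL-Probability.Probability"
begin

definition LR :: "'e pmf \<Rightarrow> 'e pmf \<Rightarrow> 'e \<Rightarrow> real" where
  "LR S G e = (if pmf G e > 0 then pmf S e / pmf G e else 0)"

definition is_decr_order :: "nat \<Rightarrow> (nat \<Rightarrow> real) \<Rightarrow> (nat \<Rightarrow> real) \<Rightarrow> nat list \<Rightarrow> bool" where
  "is_decr_order N w r \<sigma> \<longleftrightarrow> distinct \<sigma> \<and> set \<sigma> = {1..N} \<and>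
     sorted_wrt (\<lambda>i j. r j * w j \<le> r i * w i) \<sigma>"

definition k_alpha :: "nat \<Rightarrow> (nat \<Rightarrow> real) \<Rightarrow> real \<Rightarrow> (nat \<Rightarrow> real) \<Rightarrow> nat list \<Rightarrow> nat" where
  "k_alpha N w \<alpha> r \<sigma> = (LEAST k. k \<le> N \<and>
     (\<Sum>j\<leftarrow>take k \<sigma>. r j * w j) \<ge> \<alpha> * (\<Sum>j=1..N. r j * w j))"

definition D_alpha :: "nat \<Rightarrow> (nat \<Rightarrow> real) \<Rightarrow> real \<Rightarrow> (nat \<Rightarrow> real) \<Rightarrow> nat list \<Rightarrow> nat set" where
  "D_alpha N w \<alpha> r \<sigma> = set (take (k_alpha N w \<alpha> r \<sigma>) \<sigma>)"

end

theory Submission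
  imports Defs
begin

(* Conditionally on the observed profiles P_1..P_N = l, the posterior weight of the source
   index i in the database is proportional to LR(l_i) * pi_i times a factor g(l) that does not
   depend on i.  D^alpha is built from exactly these weights: it is the shortest prefix of the
   indices carrying at least the fraction alpha of the total weight.  Hence, for every fixed
   observation l, P(R in D^alpha, obs = l) >= alpha * P(R in D, obs = l), and summing over the
   countably many observations gives P(R in D^alpha) >= alpha * P(R in D). *)

lemma D_alpha_subset:
  assumes "set \<sigma> = {1..N}"
  shows "D_alpha N w \<alpha> r \<sigma> \<subseteq> {1..N}"
  unfolding D_alpha_def using assms set_take_subset by metis

text \<open>Coverage of \<open>D_alpha\<close>: the cut-off \<open>k_alpha\<close> is well defined because taking the whole
  list captures the total mass, which dominates \<open>\<alpha>\<close> times itself; so the chosen prefix carries at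
  least the fraction \<open>\<alpha>\<close> of the mass. Only the fact that \<open>\<sigma>\<close> enumerates \<open>{1..N}\<close> matters here;
  the decreasing order is what makes \<open>D_alpha\<close> small, not what makes it cover.\<close>
lemma D_alpha_captures_fraction:
  assumes distinct: "distinct \<sigma>" and set: "set \<sigma> = {1..N}"
    and nonneg: "\<And>j. 0 \<le> r j * w j" and le1: "\<alpha> \<le> 1"
  shows "\<alpha> * (\<Sum>j=1..N. r j * w j) \<le> (\<Sum>j\<in>D_alpha N w \<alpha> r \<sigma>. r j * w j)"
proof -
  let ?mass = "\<lambda>k. \<Sum>j\<leftarrow>take k \<sigma>. r j * w j"
  have total: "?mass N = (\<Sum>j=1..N. r j * w j)"
    using distinct set distinct_card[OF distinct]
    by (simp add: sum_list_distinct_conv_sum_set)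
  have "0 \<le> (\<Sum>j=1..N. r j * w j)" using nonneg by (simp add: sum_nonneg)
  then have "\<alpha> * (\<Sum>j=1..N. r j * w j) \<le> (\<Sum>j=1..N. r j * w j)"
    using le1 by (metis mult_left_le_one_le mult_nonpos_nonneg nle_le order.trans)
  then have "\<exists>k. k \<le> N \<and> ?mass k \<ge> \<alpha> * (\<Sum>j=1..N. r j * w j)"
    using total by auto
  then have "?mass (k_alpha N w \<alpha> r \<sigma>) \<ge> \<alpha> * (\<Sum>j=1..N. r j * w j)"
    unfolding k_alpha_def by (rule LeastI2_ex) blast
  moreover have "?mass (k_alpha N w \<alpha> r \<sigma>) = (\<Sum>j\<in>D_alpha N w \<alpha> r \<sigma>. r j * w j)"
    unfolding D_alpha_def using distinct by (simp add: sum_list_distinct_conv_sum_set)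
  ultimately show ?thesis by simp
qed

text \<open>The same coverage for masses \<open>p i\<close> that are a common nonnegative multiple of \<open>r i * w i\<close>;
  this is the form in which it is applied to one observed value of the database profiles.\<close>
lemma D_alpha_weighted_fraction:
  assumes distinct: "distinct \<sigma>" and set: "set \<sigma> = {1..N}"
    and nonneg: "\<And>j. 0 \<le> r j * w j" and le1: "\<alpha> \<le> 1" and "0 \<le> c"
    and p: "\<And>i. i \<in> {1..N} \<Longrightarrow> p i = r i * w i * c"
  shows "\<alpha> * (\<Sum>i\<in>{1..N}. p i) \<le> (\<Sum>i\<in>{1..N} \<inter> D_alpha N w \<alpha> r \<sigma>. p i)"
proof -
  let ?D = "D_alpha N w \<alpha> r \<sigma>"
  have sub: "?D \<subseteq> {1..N}" using D_alpha_subset[OF set] .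
  have "\<alpha> * (\<Sum>i\<in>{1..N}. p i) = (\<alpha> * (\<Sum>i\<in>{1..N}. r i * w i)) * c"
    using p by (simp add: sum_distrib_right mult.assoc)
  also have "\<dots> \<le> (\<Sum>i\<in>?D. r i * w i) * c"
    using D_alpha_captures_fraction[OF distinct set nonneg le1] \<open>0 \<le> c\<close>
    by (rule mult_right_mono)
  also have "\<dots> = (\<Sum>i\<in>{1..N} \<inter> ?D. p i)"
    using sub p by (simp add: Int_absorb1 sum_distrib_right subset_iff)
  finally show ?thesis .
qed

lemma prod_switch_one_factor:
  assumes "finite A" and "i \<in> A" and "f i = c * g i"
  shows "(\<Prod>j\<in>A. if j = i then f j else g j) = c * (\<Prod>j\<in>A. g j)"
proof -
  have "(\<Prod>j\<in>A. if j = i then f j else g j) = f i * (\<Prod>j\<in>A - {i}. g j)"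
    using assms(1,2) by (simp add: prod.remove[of _ i])
  also have "\<dots> = c * (g i * (\<Prod>j\<in>A - {i}. g j))" using assms(3) by (simp add: mult.assoc)
  also have "g i * (\<Prod>j\<in>A - {i}. g j) = (\<Prod>j\<in>A. g j)"
    using assms(1,2) by (simp add: prod.remove[of _ i])
  finally show ?thesis .
qed

lemma pmf_eq_LR_mult:
  assumes "pmf S e > 0 \<Longrightarrow> pmf G e > 0"
  shows "pmf S e = LR S G e * pmf G e"
proof (cases "pmf G e > 0")
  case False
  then have "pmf S e = 0" using assms pmf_nonneg[of S e] by linarith
  then show ?thesis by (simp add: LR_def)
qed (simp add: LR_def)

lemma emeasure_decompose_by_values:
  fixes R :: "'a \<Rightarrow> 'i" and X :: "'a \<Rightarrow> 'b::countable"
  assumes "finite I"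
    and [measurable]: "R \<in> measurable M (count_space UNIV)" "X \<in> measurable M (count_space UNIV)"
  shows "emeasure M {x\<in>space M. R x \<in> I \<and> Q (R x) (X x)}
    = (\<integral>\<^sup>+l. (\<Sum>i\<in>I. emeasure M {x\<in>space M. R x = i \<and> X x = l} * indicator {l. Q i l} l)
          \<partial>count_space UNIV)"
proof -
  define A where "A i l = {x\<in>space M. R x = i \<and> X x = l}" for i l
  have A_sets [measurable]: "A i l \<in> sets M" for i l
    unfolding A_def by measurable
  have "{x\<in>space M. R x \<in> I \<and> Q (R x) (X x)} = (\<Union>i\<in>I. \<Union>l\<in>{l. Q i l}. A i l)"
    by (auto simp: A_def)
  then have "emeasure M {x\<in>space M. R x \<in> I \<and> Q (R x) (X x)}
      = (\<Sum>i\<in>I. emeasure M (\<Union>l\<in>{l. Q i l}. A i l))"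
    by (simp, intro sum_emeasure[symmetric])
       (auto simp: \<open>finite I\<close> disjoint_family_on_def A_def)
  also have "\<dots> = (\<Sum>i\<in>I. \<integral>\<^sup>+l. emeasure M (A i l) \<partial>count_space {l. Q i l})"
    by (intro sum.cong refl emeasure_UN_countable) (auto simp: disjoint_family_on_def A_def)
  also have "\<dots> = (\<Sum>i\<in>I. \<integral>\<^sup>+l. emeasure M (A i l) * indicator {l. Q i l} l \<partial>count_space UNIV)"
    by (simp add: nn_integral_count_space_indicator)
  also have "\<dots> = (\<integral>\<^sup>+l. (\<Sum>i\<in>I. emeasure M (A i l) * indicator {l. Q i l} l) \<partial>count_space UNIV)"
    by (rule nn_integral_sum[symmetric]) simp
  finally show ?thesis by (simp add: A_def)
qed

lemma (in prob_space) prob_fraction_by_values: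
  fixes R :: "'a \<Rightarrow> 'i" and X :: "'a \<Rightarrow> 'b::countable"
  assumes I: "finite I"
    and R: "R \<in> measurable M (count_space UNIV)" and X: "X \<in> measurable M (count_space UNIV)"
    and "0 \<le> \<alpha>"
    and frac: "\<And>l. \<alpha> * (\<Sum>i\<in>I. prob {x\<in>space M. R x = i \<and> X x = l})
                 \<le> (\<Sum>i\<in>I \<inter> D l. prob {x\<in>space M. R x = i \<and> X x = l})"
  shows "\<alpha> * prob {x\<in>space M. R x \<in> I} \<le> prob {x\<in>space M. R x \<in> I \<inter> D (X x)}"
proof -
  let ?p = "\<lambda>i l. prob {x\<in>space M. R x = i \<and> X x = l}"
  have slice: "(\<Sum>i\<in>I. emeasure M {x\<in>space M. R x = i \<and> X x = l} * indicator {l. Q i l} l)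
      = ennreal (\<Sum>i\<in>I \<inter> {i. Q i l}. ?p i l)" for Q l
    using I by (simp add: emeasure_eq_measure sum.inter_restrict indicator_def if_distrib cong: if_cong)
  have decompose: "emeasure M {x\<in>space M. R x \<in> I \<and> Q (R x) (X x)}
      = (\<integral>\<^sup>+l. ennreal (\<Sum>i\<in>I \<inter> {i. Q i l}. ?p i l) \<partial>count_space UNIV)" for Q
    unfolding emeasure_decompose_by_values[OF I R X] slice ..
  have "ennreal (\<alpha> * prob {x\<in>space M. R x \<in> I})
      = ennreal \<alpha> * emeasure M {x\<in>space M. R x \<in> I \<and> True}"
    using \<open>0 \<le> \<alpha>\<close> by (simp add: emeasure_eq_measure ennreal_mult)
  also have "\<dots> = (\<integral>\<^sup>+l. ennreal (\<alpha> * (\<Sum>i\<in>I. ?p i l)) \<partial>count_space UNIV)"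
    using \<open>0 \<le> \<alpha>\<close> decompose[of "\<lambda>_ _. True"]
    by (simp add: nn_integral_cmult[symmetric] ennreal_mult')
  also have "\<dots> \<le> (\<integral>\<^sup>+l. ennreal (\<Sum>i\<in>I \<inter> D l. ?p i l) \<partial>count_space UNIV)"
    by (intro nn_integral_mono ennreal_leI frac)
  also have "\<dots> = emeasure M {x\<in>space M. R x \<in> I \<and> R x \<in> D (X x)}"
    using decompose[of "\<lambda>i l. i \<in> D l"] by (simp add: Int_def)
  finally show ?thesis
    by (simp add: emeasure_eq_measure ennreal_le_iff)
qed

lemma (in finite_measure) measure_value_in_finite_set:
  assumes "finite I" and "R \<in> measurable M (count_space UNIV)"
  shows "measure M {x\<in>space M. R x \<in> I} = (\<Sum>i\<in>I. measure M {x\<in>space M. R x = i})"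
proof -
  have "{x\<in>space M. R x \<in> I} = (\<Union>i\<in>I. {x\<in>space M. R x = i})" by auto
  moreover have "{x\<in>space M. R x = i} \<in> sets M" for i
    using assms(2) by measurable
  ultimately show ?thesis
    using assms(1) by (simp, intro measure_finite_Union) (auto simp: disjoint_family_on_def)
qed

text \<open>The profiles \<open>P 1, \<dots>, P N\<close> packed into one random variable with countably many values,
  and the likelihood-ratio vector as a function of such an observation.\<close>
definition obs_list :: "nat \<Rightarrow> (nat \<Rightarrow> 'a \<Rightarrow> 'e) \<Rightarrow> 'a \<Rightarrow> 'e list" where
  "obs_list N P x = map (\<lambda>k. P (Suc k) x) [0..<N]"

definition LR_of_list :: "'e pmf \<Rightarrow> 'e pmf \<Rightarrow> nat \<Rightarrow> 'e list \<Rightarrow> nat \<Rightarrow> real" where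
  "LR_of_list S G N l j = (if j \<in> {1..N} then LR S G (l ! (j - 1)) else 0)"

lemma LR_of_obs_list:
  "LR_of_list S G N (obs_list N P x) = (\<lambda>j. if j \<in> {1..N} then LR S G (P j x) else 0)"
  by (rule ext) (auto simp: LR_of_list_def obs_list_def)

lemma ball_atLeastAtMost_Suc: "(\<forall>j\<in>{1..N}. Q j) \<longleftrightarrow> (\<forall>k<N. Q (Suc k))"
proof
  assume "\<forall>j\<in>{1..N}. Q j"
  then show "\<forall>k<N. Q (Suc k)" by auto
next
  assume Q: "\<forall>k<N. Q (Suc k)"
  show "\<forall>j\<in>{1..N}. Q j"
  proof
    fix j :: nat
    assume "j \<in> {1..N}"
    then have "j = Suc (j - 1)" and "j - 1 < N" by auto
    then show "Q j" using Q by metis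
  qed
qed

lemma obs_list_eq_iff:
  assumes "length l = N"
  shows "obs_list N P x = l \<longleftrightarrow> (\<forall>j\<in>{1..N}. P j x = l ! (j - 1))"
proof -
  have "obs_list N P x = l \<longleftrightarrow> (\<forall>k<N. P (Suc k) x = l ! k)"
    using assms by (auto simp: obs_list_def list_eq_iff_nth_eq)
  also have "\<dots> \<longleftrightarrow> (\<forall>j\<in>{1..N}. P j x = l ! (j - 1))"
    unfolding ball_atLeastAtMost_Suc by simp
  finally show ?thesis .
qed

text \<open>Since \<open>'e list\<close> is countable, it suffices that each fibre of \<open>obs_list\<close> is an event.\<close>
lemma obs_list_measurable:
  fixes P :: "nat \<Rightarrow> 'a \<Rightarrow> 'e::countable"
  assumes "\<And>j. j \<in> {1..N} \<Longrightarrow> P j \<in> measurable M (count_space UNIV)"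
  shows "obs_list N P \<in> measurable M (count_space UNIV)"
  unfolding measurable_count_space_eq2_countable
proof (intro conjI ballI)
  fix l :: "'e list"
  show "obs_list N P -` {l} \<inter> space M \<in> sets M"
  proof (cases "length l = N")
    case True
    have "obs_list N P -` {l} \<inter> space M = {x\<in>space M. \<forall>j\<in>{1..N}. P j x = l ! (j - 1)}"
      using obs_list_eq_iff[OF True, of P] by blast
    also have "\<dots> \<in> sets M"
    proof (intro sets.sets_Collect_finite_All)
      fix j assume "j \<in> {1..N}"
      note [measurable] = assms[OF this]
      show "{x\<in>space M. P j x = l ! (j - 1)} \<in> sets M" by measurable
    qed simp
    finally show ?thesis .
  next
    case False
    then have "obs_list N P -` {l} = {}" by (auto simp: obs_list_def)
    then show ?thesis by simp
  qed
qed simp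

lemma joint_law_obs_list:
  assumes model: "\<And>e. measure M {x\<in>space M. R x = i \<and> (\<forall>j\<in>{1..N}. P j x = e j)}
                   = \<pi> i * (\<Prod>j\<in>{1..N}. if j = i then pmf S (e j) else pmf G (e j))"
    and ac: "\<And>e. pmf S e > 0 \<Longrightarrow> pmf G e > 0"
    and i: "i \<in> {1..N}" and len: "length l = N"
  shows "measure M {x\<in>space M. R x = i \<and> obs_list N P x = l}
    = LR_of_list S G N l i * \<pi> i * (\<Prod>j\<in>{1..N}. pmf G (l ! (j - 1)))"
proof -
  have "{x\<in>space M. R x = i \<and> obs_list N P x = l}
      = {x\<in>space M. R x = i \<and> (\<forall>j\<in>{1..N}. P j x = l ! (j - 1))}"
    using obs_list_eq_iff[OF len, of P] by blast
  then have "measure M {x\<in>space M. R x = i \<and> obs_list N P x = l}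
      = \<pi> i * (\<Prod>j\<in>{1..N}. if j = i then pmf S (l ! (j - 1)) else pmf G (l ! (j - 1)))"
    using model[of "\<lambda>j. l ! (j - 1)"] by simp
  also have "\<dots> = \<pi> i * (LR S G (l ! (i - 1)) * (\<Prod>j\<in>{1..N}. pmf G (l ! (j - 1))))"
    using prod_switch_one_factor[OF finite_atLeastAtMost i,
        of "\<lambda>j. pmf S (l ! (j - 1))" "LR S G (l ! (i - 1))" "\<lambda>j. pmf G (l ! (j - 1))"]
      pmf_eq_LR_mult[OF ac] by simp
  finally show ?thesis using i by (simp add: LR_of_list_def)
qed

lemma fraction_given_observation:
  fixes l :: "'e list"
  assumes model: "\<And>i e. i \<in> {1..N} \<Longrightarrow>
      measure M {x\<in>space M. R x = i \<and> (\<forall>j\<in>{1..N}. P j x = e j)}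
      = \<pi> i * (\<Prod>j\<in>{1..N}. if j = i then pmf S (e j) else pmf G (e j))"
    and ac: "\<And>e. pmf S e > 0 \<Longrightarrow> pmf G e > 0"
    and \<pi>_nonneg: "\<And>i. 0 \<le> \<pi> i"
    and order: "\<And>r. distinct (ord r)" "\<And>r. set (ord r) = {1..N}"
    and "\<alpha> \<le> 1"
  defines "r \<equiv> LR_of_list S G N l"
  shows "\<alpha> * (\<Sum>i\<in>{1..N}. measure M {x\<in>space M. R x = i \<and> obs_list N P x = l})
    \<le> (\<Sum>i\<in>{1..N} \<inter> D_alpha N \<pi> \<alpha> r (ord r).
          measure M {x\<in>space M. R x = i \<and> obs_list N P x = l})"
proof (cases "length l = N")
  case True
  let ?g = "\<Prod>j\<in>{1..N}. pmf G (l ! (j - 1))"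
  have joint: "measure M {x\<in>space M. R x = i \<and> obs_list N P x = l} = r i * \<pi> i * ?g"
    if "i \<in> {1..N}" for i
    unfolding r_def by (rule joint_law_obs_list[OF _ ac that True], rule model[OF that])
  have nonneg: "0 \<le> r j * \<pi> j" for j
    by (simp add: r_def LR_of_list_def LR_def \<pi>_nonneg)
  have "0 \<le> ?g" by (intro prod_nonneg) simp
  from D_alpha_weighted_fraction[OF order nonneg \<open>\<alpha> \<le> 1\<close> this joint]
  show ?thesis .
next
  case False
  then have "{x\<in>space M. R x = i \<and> obs_list N P x = l} = {}" for i
    by (auto simp: obs_list_def)
  then show ?thesis by (simp only: measure_empty) simp
qed

theorem mainTheorem4:
  fixes M :: "'a measure" and N :: nat and R :: "'a \<Rightarrow> nat"
    and P :: "nat \<Rightarrow> 'a \<Rightarrow> 'e::countable" and S G :: "'e pmf"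
    and \<alpha> :: real and ord :: "(nat \<Rightarrow> real) \<Rightarrow> nat list"
  defines "\<pi> \<equiv> (\<lambda>i. prob_space.prob M {x \<in> space M. R x = i})"
  defines "LRvec \<equiv> (\<lambda>x j. if j \<in> {1..N} then LR S G (P j x) else 0)"
  assumes "prob_space M"
    and "N \<ge> 1"
    and "\<And>e. pmf S e > 0 \<Longrightarrow> pmf G e > 0"
    and "R \<in> measurable M (count_space UNIV)"
    and "\<And>x. x \<in> space M \<Longrightarrow> R x \<le> N"
    and "\<And>j. j \<in> {1..N} \<Longrightarrow> P j \<in> measurable M (count_space UNIV)"
    and "\<And>i (e :: nat \<Rightarrow> 'e). i \<le> N \<Longrightarrow>
           prob_space.prob M {x \<in> space M. R x = i \<and> (\<forall>j\<in>{1..N}. P j x = e j)}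
           = \<pi> i * (\<Prod>j\<in>{1..N}. if j = i then pmf S (e j) else pmf G (e j))"
    and "(\<Sum>i=1..N. \<pi> i) > 0"
    and "0 \<le> \<alpha>" and "\<alpha> \<le> 1"
    and "\<And>r. is_decr_order N \<pi> r (ord r)"
  shows "cond_prob M (\<lambda>x. R x \<in> D_alpha N \<pi> \<alpha> (LRvec x) (ord (LRvec x)))
                     (\<lambda>x. R x \<in> {1..N}) \<ge> \<alpha>
    \<and> (prob_space.prob M {x \<in> space M. R x \<in> {1..N}} = 1 \<longrightarrow>
         prob_space.prob M {x \<in> space M. R x \<in> D_alpha N \<pi> \<alpha> (LRvec x) (ord (LRvec x))} \<ge> \<alpha>)"
proof -
  interpret prob_space M by fact
  define D where "D l = D_alpha N \<pi> \<alpha> (LR_of_list S G N l) (ord (LR_of_list S G N l))" for l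
  have order: "distinct (ord r)" "set (ord r) = {1..N}" for r
    using assms(13) by (auto simp: is_decr_order_def)
  have "\<alpha> * prob {x\<in>space M. R x \<in> {1..N}}
      \<le> prob {x\<in>space M. R x \<in> {1..N} \<inter> D (obs_list N P x)}"
    unfolding D_def using assms(5,6,8,9,11,12) order
    by (intro prob_fraction_by_values obs_list_measurable fraction_given_observation)
       (auto simp: \<pi>_def)
  moreover have "{x\<in>space M. R x \<in> {1..N} \<inter> D (obs_list N P x)}
      = {x\<in>space M. R x \<in> D_alpha N \<pi> \<alpha> (LRvec x) (ord (LRvec x))}"
    and "{x\<in>space M. R x \<in> D_alpha N \<pi> \<alpha> (LRvec x) (ord (LRvec x)) \<and> R x \<in> {1..N}}
      = {x\<in>space M. R x \<in> D_alpha N \<pi> \<alpha> (LRvec x) (ord (LRvec x))}"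
    using D_alpha_subset[OF order(2)] unfolding D_def LRvec_def LR_of_obs_list by blast+
  moreover have "prob {x\<in>space M. R x \<in> {1..N}} > 0"
    using measure_value_in_finite_set[OF finite_atLeastAtMost assms(6), of 1 N] assms(10)
    by (simp add: \<pi>_def)
  ultimately show ?thesis
    unfolding cond_prob_def by (auto simp: le_divide_eq)
qed

end
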